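(* Let $T_{p,q}(x)=\dfrac{U_p\left(\frac{\sin x}{x}\right)}{U_q(\cos x)}$ for $x\in(0,\pi/2)$ and $p,q\in\mathbb{R}$. Then (i) when $q>1$, $T_{p,q}$ is increasing on $(0,\pi/2)$ for $p\le3q-\frac85$; (ii) when $q=1$, $T_{p,q}$ is increasing on $(0,\pi/2)$ for $p\le\frac75$ and decreasing on $(0,\pi/2)$ for $p\ge\frac{\pi^2}{4}-1$; (iii) when $\frac{34}{35}<q<1$, $T_{p,q}$ is decreasing on $(0,\pi/2)$ for $p\ge\frac{\pi^2}{4}-1$; (iv) when $q\le\frac{34}{35}$, $T_{p,q}$ is decreasing on $(0,\pi/2)$ for $p\ge3q-\frac85$.
   Context: For $t\in(0,1)$: $U_p(t)=\frac{1-t^p}{p}$ if $p\ne0$ and $U_0(t)=-\ln t$. *)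

theory Defs
  imports "HOL-Analysis.Analysis"
begin

definition U :: "real \<Rightarrow> real \<Rightarrow> real" where
  "U p t = (if p = 0 then - ln t else (1 - t powr p) / p)"

definition T :: "real \<Rightarrow> real \<Rightarrow> real \<Rightarrow> real" where
  "T p q x = U p (sin x / x) / U q (cos x)"

definition strict_incr_on :: "real set \<Rightarrow> (real \<Rightarrow> real) \<Rightarrow> bool" where
  "strict_incr_on S f \<longleftrightarrow> (\<forall>x\<in>S. \<forall>y\<in>S. x < y \<longrightarrow> f x < f y)"

definition strict_decr_on :: "real set \<Rightarrow> (real \<Rightarrow> real) \<Rightarrow> bool" where
  "strict_decr_on S f \<longleftrightarrow> (\<forall>x\<in>S. \<forall>y\<in>S. x < y \<longrightarrow> f x > f y)"

end

theory Submission
  imports Defs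
begin

text \<open>
  Write \<open>T p q = f / g\<close> with \<open>f x = U p (sin x / x)\<close> and \<open>g x = U q (cos x)\<close>. Both vanish as
  \<open>x \<rightarrow> 0\<^sup>+\<close> and \<open>g' > 0\<close>, so by the monotone form of L'Hopital's rule \<open>T\<close> is strictly
  monotone as soon as \<open>f' / g'\<close> is. Logarithmic differentiation gives
  \<open>(ln (f' / g'))' = (1 - p) V + M + (q - 1) tan x\<close>, where \<open>V\<close> is minus the log-derivative
  of \<open>sin x / x\<close> and \<open>M\<close> the log-derivative of \<open>(sin x - x cos x) / (x\<^sup>2 sin x)\<close>. In the
  parameter ranges of the theorem this is a combination, with coefficients of constant sign, of
  the differences in the four inequalities
  \<open>3 V < tan x\<close>, \<open>2 V < 5 M\<close>, \<open>35 M < 11 V + tan x\<close> and \<open>M < (\<pi>\<^sup>2/4 - 2) V\<close>.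
  Cleared of denominators, each says that a polynomial in \<open>x\<close> and sines and cosines of multiples
  of \<open>x\<close> is positive. Replacing sine and cosine by Taylor polynomials with Lagrange remainder
  leaves a polynomial inequality on an interval, certified by writing the polynomial in Bernstein
  form with positive coefficients. For the last inequality the expression vanishes at \<open>\<pi>/2\<close>;
  near that end its positivity follows from a certified sign of its derivative.
\<close>

lemma Maclaurin_cos_bound:
  "\<bar>cos x - (\<Sum>m<n. cos_coeff m * x ^ m)\<bar> \<le> inverse (fact n) * \<bar>x\<bar> ^ n"
proof -
  obtain t where "cos x = (\<Sum>m<n. cos_coeff m * x ^ m) + (cos (t + 1/2 * real n * pi) / fact n) * x ^ n"
    using Maclaurin_cos_expansion by blast
  then have "\<bar>cos x - (\<Sum>m<n. cos_coeff m * x ^ m)\<bar> = \<bar>cos (t + 1/2 * real n * pi)\<bar> / fact n * \<bar>x\<bar> ^ n"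
    by (simp add: abs_mult power_abs)
  also have "\<dots> \<le> 1 / fact n * \<bar>x\<bar> ^ n"
    by (intro mult_right_mono divide_right_mono) auto
  finally show ?thesis
    by (simp add: divide_inverse)
qed

lemma mult_ge_of_abs_diff_le:
  fixes a b t s e :: real
  assumes "\<bar>t - s\<bar> \<le> e" "\<bar>a\<bar> \<le> b"
  shows "a * s - b * e \<le> a * t"
proof -
  have "\<bar>a * (t - s)\<bar> \<le> b * e"
    unfolding abs_mult using assms by (intro mult_mono) auto
  then show ?thesis
    by (simp add: algebra_simps abs_le_iff)
qed

text \<open>\<open>bernstein_form [c\<^sub>0, \<dots>, c\<^sub>n] a b x = (\<Sum>i\<le>n. c\<^sub>i * (x - a) ^ i * (b - x) ^ (n - i))\<close>\<close>

fun bernstein_form :: "real list \<Rightarrow> real \<Rightarrow> real \<Rightarrow> real \<Rightarrow> real" where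
  "bernstein_form [] a b x = 0"
| "bernstein_form (c # cs) a b x = c * (b - x) ^ length cs + (x - a) * bernstein_form cs a b x"

lemma bernstein_form_nonneg:
  assumes "a \<le> x" "x \<le> b" "\<forall>c\<in>set cs. 0 \<le> c"
  shows "0 \<le> bernstein_form cs a b x"
  using assms(3) by (induction cs) (use assms(1,2) in auto)

lemma bernstein_form_pos:
  assumes "a \<le> x" "x < b" "0 < c" "\<forall>c\<in>set cs. 0 \<le> c"
  shows "0 < bernstein_form (c # cs) a b x"
  using assms bernstein_form_nonneg[of a x b cs] by (simp add: add_pos_nonneg)

lemma sin_treble_sin: "sin (3 * x :: real) = 3 * sin x - 4 * sin x ^ 3"
proof -
  have "sin (3 * x) = sin (2 * x + x)"
    by (simp add: algebra_simps)
  also have "\<dots> = 3 * sin x - 4 * sin x ^ 3"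
    unfolding sin_add sin_double cos_double using sin_cos_squared_add[of x] by algebra
  finally show ?thesis .
qed

lemma x_cos_less_sin:
  assumes "0 < x" "x \<le> pi"
  shows "x * cos x < sin x"
proof -
  have "(\<lambda>t. sin t - t * cos t) 0 < (\<lambda>t. sin t - t * cos t) x"
  proof (rule DERIV_pos_imp_increasing_open[OF assms(1)])
    fix t assume t: "0 < t" "t < x"
    have "((\<lambda>t. sin t - t * cos t) has_real_derivative t * sin t) (at t)"
      by (auto intro!: derivative_eq_intros simp: algebra_simps)
    moreover have "0 < t * sin t"
      using t assms by (intro mult_pos_pos sin_gt_zero) auto
    ultimately show "\<exists>y. ((\<lambda>t. sin t - t * cos t) has_real_derivative y) (at t) \<and> 0 < y"
      by blast
  qed (intro continuous_intros)
  then show ?thesis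
    by simp
qed

lemma pi_half_less_11_7: "pi / 2 < 11 / 7"
  using pi_approx(2) by simp

lemma sin_cos_basic_bounds:
  assumes "0 < x" "x < pi / 2"
  shows "0 < sin x" "0 < cos x" "x * cos x < sin x" "x < 11 / 7"
  using assms sin_gt_zero2 cos_gt_zero x_cos_less_sin pi_half_less_11_7 by auto

lemma tan_bound_trig_poly_pos:
  fixes x :: real
  assumes "0 < x" "x < 11/7"
  shows "0 < 2 * x + x * cos (2 * x) - 3/2 * sin (2 * x)"
proof -
  have c: "x * (\<Sum>m<8. cos_coeff m * (2 * x) ^ m) - x * (inverse (fact 8) * \<bar>2 * x\<bar> ^ 8)
      \<le> x * cos (2 * x)" (is "?C \<le> _")
    using assms by (intro mult_ge_of_abs_diff_le Maclaurin_cos_bound) auto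
  have s: "- 3/2 * (\<Sum>m<9. sin_coeff m * (2 * x) ^ m) - 3/2 * (inverse (fact 9) * \<bar>2 * x\<bar> ^ 9)
      \<le> - 3/2 * sin (2 * x)" (is "?S \<le> _")
    by (intro mult_ge_of_abs_diff_le Maclaurin_sin_bound) auto
  have "2 * x + ?C + ?S = x ^ 5 * bernstein_form
      [9604/219615, 38416/219615, 31864/131769, 88144/658845, 203332/13835745] 0 (11/7) x"
    (is "_ = ?B") using assms
    by (simp add: lessThan_nat_numeral cos_coeff_def sin_coeff_def fact_numeral abs_of_pos) algebra
  moreover have "0 < ?B"
    using assms by (intro mult_pos_pos zero_less_power bernstein_form_pos) auto
  ultimately have "0 < 2 * x + ?C + ?S"
    by (simp only:)
  then show ?thesis
    using c s by linarith
qed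

lemma core_lower_trig_poly_pos:
  fixes x :: real
  assumes "0 < x" "x < 11/7"
  shows "0 < - 6 + 4 * x ^ 2 + (6 - x ^ 2) * cos (2 * x) + 9/2 * x * sin (2 * x)"
proof -
  have c: "(6 - x ^ 2) * (\<Sum>m<10. cos_coeff m * (2 * x) ^ m)
      - (6 + x ^ 2) * (inverse (fact 10) * \<bar>2 * x\<bar> ^ 10) \<le> (6 - x ^ 2) * cos (2 * x)"
    (is "?C \<le> _")
    by (intro mult_ge_of_abs_diff_le Maclaurin_cos_bound) (auto simp: abs_le_iff)
  have s: "9/2 * x * (\<Sum>m<11. sin_coeff m * (2 * x) ^ m) - 9/2 * x * (inverse (fact 11) * \<bar>2 * x\<bar> ^ 11)
      \<le> 9/2 * x * sin (2 * x)" (is "?S \<le> _")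
    using assms by (intro mult_ge_of_abs_diff_le Maclaurin_sin_bound) auto
  have "- 6 + 4 * x ^ 2 + ?C + ?S = x ^ 8 * bernstein_form
      [1372/658845, 5488/658845, 116704/9882675, 68768/9882675, 183404/207536175] 0 (11/7) x"
    (is "_ = ?B") using assms
    by (simp add: lessThan_nat_numeral cos_coeff_def sin_coeff_def fact_numeral abs_of_pos) algebra
  moreover have "0 < ?B"
    using assms by (intro mult_pos_pos zero_less_power bernstein_form_pos) auto
  ultimately have "0 < - 6 + 4 * x ^ 2 + ?C + ?S"
    by (simp only:)
  then show ?thesis
    using c s by linarith
qed

lemma core_upper_trig_poly_pos:
  fixes x :: real
  assumes "0 < x" "x < 11/7"
  shows "0 < - 54 * x * sin x - 58 * x * sin (3 * x) + (81 - 108 * x ^ 2) * cos x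
    + (12 * x ^ 2 - 81) * cos (3 * x)"
proof -
  have s1: "- 54 * x * (\<Sum>m<17. sin_coeff m * x ^ m) - 54 * x * (inverse (fact 17) * \<bar>x\<bar> ^ 17)
      \<le> - 54 * x * sin x" (is "?S1 \<le> _")
    using assms by (intro mult_ge_of_abs_diff_le Maclaurin_sin_bound) auto
  have s3: "- 58 * x * (\<Sum>m<17. sin_coeff m * (3 * x) ^ m) - 58 * x * (inverse (fact 17) * \<bar>3 * x\<bar> ^ 17)
      \<le> - 58 * x * sin (3 * x)" (is "?S3 \<le> _")
    using assms by (intro mult_ge_of_abs_diff_le Maclaurin_sin_bound) auto
  have c1: "(81 - 108 * x ^ 2) * (\<Sum>m<16. cos_coeff m * x ^ m)
      - (81 + 108 * x ^ 2) * (inverse (fact 16) * \<bar>x\<bar> ^ 16) \<le> (81 - 108 * x ^ 2) * cos x"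
    (is "?C1 \<le> _")
    by (intro mult_ge_of_abs_diff_le Maclaurin_cos_bound) (auto simp: abs_le_iff)
  have c3: "(12 * x ^ 2 - 81) * (\<Sum>m<16. cos_coeff m * (3 * x) ^ m)
      - (12 * x ^ 2 + 81) * (inverse (fact 16) * \<bar>3 * x\<bar> ^ 16) \<le> (12 * x ^ 2 - 81) * cos (3 * x)"
    (is "?C3 \<le> _")
    by (intro mult_ge_of_abs_diff_le Maclaurin_cos_bound) (auto simp: abs_le_iff)
  have "?S1 + ?S3 + ?C1 + ?C3 = x ^ 10 * bernstein_form
      [52706752/16076916075, 421654016/16076916075, 1446208736/16076916075,
       2774096192/16076916075, 14098212184/69666636325, 10359416928/69666636325,
       10321227823685807/154091452889088000, 1305329131036847/77045726444544000,
       10960464675435949/6112294297933824000] 0 (11/7) x"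
    (is "_ = ?B") using assms
    by (simp add: lessThan_nat_numeral cos_coeff_def sin_coeff_def fact_numeral abs_of_pos) algebra
  moreover have "0 < ?B"
    using assms by (intro mult_pos_pos zero_less_power bernstein_form_pos) auto
  ultimately have "0 < ?S1 + ?S3 + ?C1 + ?C3"
    by (simp only:)
  then show ?thesis
    using s1 s3 c1 c3 by linarith
qed

lemma pi_sq_small_trig_poly_pos:
  fixes x :: real
  assumes "0 < x" "x < 7/5"
  shows "0 < 39476089/32000000 - 24523911/32000000 * x ^ 2
    + (7476089/32000000 * x ^ 2 - 39476089/32000000) * cos (2 * x)
    - 15476089/16000000 * x * sin (2 * x)"
proof -
  have c: "(7476089/32000000 * x ^ 2 - 39476089/32000000) * (\<Sum>m<12. cos_coeff m * (2 * x) ^ m)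
      - (7476089/32000000 * x ^ 2 + 39476089/32000000) * (inverse (fact 12) * \<bar>2 * x\<bar> ^ 12)
      \<le> (7476089/32000000 * x ^ 2 - 39476089/32000000) * cos (2 * x)" (is "?C \<le> _")
    by (intro mult_ge_of_abs_diff_le Maclaurin_cos_bound) (auto simp: abs_le_iff)
  have s: "- (15476089/16000000 * x) * (\<Sum>m<13. sin_coeff m * (2 * x) ^ m)
      - 15476089/16000000 * x * (inverse (fact 13) * \<bar>2 * x\<bar> ^ 13)
      \<le> - (15476089/16000000 * x) * sin (2 * x)" (is "?S \<le> _")
    using assms by (intro mult_ge_of_abs_diff_le Maclaurin_sin_bound) auto
  have "39476089/32000000 - 24523911/32000000 * x ^ 2 + ?C + ?S = x ^ 6 * bernstein_form
      [549025/1084253184, 549025/135531648, 517711877/37948861440, 477046631/18974430720,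
       48971833703/1778852880000, 32244315437/1778852880000,
       241496825235709/35221287024000000, 22801141308109/17610643512000000,
       859632745752301/11446918282800000000] 0 (7/5) x"
    (is "_ = ?B") using assms
    by (simp add: lessThan_nat_numeral cos_coeff_def sin_coeff_def fact_numeral abs_of_pos) algebra
  moreover have "0 < ?B"
    using assms by (intro mult_pos_pos zero_less_power bernstein_form_pos) auto
  ultimately have "0 < 39476089/32000000 - 24523911/32000000 * x ^ 2 + ?C + ?S"
    by (simp only:)
  then show ?thesis
    using c s by linarith
qed

lemma pi_sq_deriv_trig_poly_pos:
  fixes x :: real
  assumes "7/5 \<le> x" "x < 11/7"
  shows "0 < 9578671/6250000 * x + (2921329/6250000 * x ^ 2 - 3/2) * sin (2 * x)
    + 9171329/6250000 * x * cos (2 * x)"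
proof -
  have s: "(2921329/6250000 * x ^ 2 - 3/2) * (\<Sum>m<11. sin_coeff m * (2 * x) ^ m)
      - (2921329/6250000 * x ^ 2 + 3/2) * (inverse (fact 11) * \<bar>2 * x\<bar> ^ 11)
      \<le> (2921329/6250000 * x ^ 2 - 3/2) * sin (2 * x)" (is "?S \<le> _")
    by (intro mult_ge_of_abs_diff_le Maclaurin_sin_bound) (auto simp: abs_le_iff)
  have c: "9171329/6250000 * x * (\<Sum>m<10. cos_coeff m * (2 * x) ^ m)
      - 9171329/6250000 * x * (inverse (fact 10) * \<bar>2 * x\<bar> ^ 10)
      \<le> 9171329/6250000 * x * cos (2 * x)" (is "?C \<le> _")
    using assms by (intro mult_ge_of_abs_diff_le Maclaurin_cos_bound) auto
  have "9578671/6250000 * x + ?S + ?C = bernstein_form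
      [1351511188698182097100077577/20662426080000000000,
       56640629319432478205443859119/45457337376000000000,
       380785856998104418641441647/37881114480000000,
       972707391719036211906849643/20662426080000000,
       960386281139288270667276401/6611976345600000,
       231288481387872238791483169/734664038400000,
       27336837612265572855419473/55099802880000,
       254731321729889726601383/440798423040,
       2932140490332351430982843/5877312307200,
       668421784878736949402419/2115832430592,
       37778333626425312847619/264479053824,
       963602469764705869945/22039921152,
       17194934151815877832375/2115832430592,
       10268833653204776241625/14810827014144] (7/5) (11/7) x"
    (is "_ = ?B") using assms
    by (simp add: lessThan_nat_numeral cos_coeff_def sin_coeff_def fact_numeral abs_of_pos) algebra
  moreover have "0 < ?B"
    using assms by (intro bernstein_form_pos) auto
  ultimately have "0 < 9578671/6250000 * x + ?S + ?C"
    by (simp only:)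
  then show ?thesis
    using s c by linarith
qed

text \<open>Minus the log-derivative of \<open>sin x / x\<close>, and the log-derivative of \<open>(sin x - x cos x) / (x\<^sup>2 sin x)\<close>.\<close>

definition sinc_log_decay :: "real \<Rightarrow> real" where
  "sinc_log_decay x = (sin x - x * cos x) / (x * sin x)"

definition core_log_growth :: "real \<Rightarrow> real" where
  "core_log_growth x = x * sin x / (sin x - x * cos x) - 2 / x - cos x / sin x"

lemma three_sinc_log_decay_less_tan:
  assumes "0 < x" "x < pi / 2"
  shows "3 * sinc_log_decay x < tan x"
proof -
  note b = sin_cos_basic_bounds[OF assms]
  have "0 < 2 * x + x * cos (2 * x) - 3/2 * sin (2 * x)"
    using tan_bound_trig_poly_pos assms b by simp
  also have "2 * x + x * cos (2 * x) - 3/2 * sin (2 * x) = x * sin x ^ 2 - 3 * cos x * (sin x - x * cos x)"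
    unfolding cos_double sin_double using sin_cos_squared_add[of x] by algebra
  also have "\<dots> = x * sin x * cos x * (tan x - 3 * sinc_log_decay x)"
    using b assms by (simp add: tan_def sinc_log_decay_def field_simps power2_eq_square)
  finally have "0 < x * sin x * cos x * (tan x - 3 * sinc_log_decay x)"
    (is "0 < _ * ?D") .
  moreover have "0 < x * sin x * cos x"
    using b assms by simp
  ultimately have "0 < ?D"
    by (rule zero_less_mult_pos)
  then show ?thesis
    by simp
qed

lemma two_sinc_log_decay_less_five_core_log_growth:
  assumes "0 < x" "x < pi / 2"
  shows "2 * sinc_log_decay x < 5 * core_log_growth x"
proof -
  note b = sin_cos_basic_bounds[OF assms]
  have "0 < - 6 + 4 * x ^ 2 + (6 - x ^ 2) * cos (2 * x) + 9/2 * x * sin (2 * x)"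
    using core_lower_trig_poly_pos assms b by simp
  also have "- 6 + 4 * x ^ 2 + (6 - x ^ 2) * cos (2 * x) + 9/2 * x * sin (2 * x)
      = 5 * x ^ 2 * sin x ^ 2 - 12 * sin x ^ 2 + 9 * x * sin x * cos x + 3 * x ^ 2 * cos x ^ 2"
    unfolding cos_double sin_double using sin_cos_squared_add[of x] by algebra
  also have "\<dots> = x * sin x * (sin x - x * cos x) * (5 * core_log_growth x - 2 * sinc_log_decay x)"
    using b assms by (simp add: core_log_growth_def sinc_log_decay_def field_simps power2_eq_square)
  finally have "0 < x * sin x * (sin x - x * cos x) * (5 * core_log_growth x - 2 * sinc_log_decay x)"
    (is "0 < _ * ?D") .
  moreover have "0 < x * sin x * (sin x - x * cos x)"
    using b assms by simp
  ultimately have "0 < ?D"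
    by (rule zero_less_mult_pos)
  then show ?thesis
    by simp
qed

lemma thirty_five_core_log_growth_less:
  assumes "0 < x" "x < pi / 2"
  shows "35 * core_log_growth x < 11 * sinc_log_decay x + tan x"
proof -
  note b = sin_cos_basic_bounds[OF assms]
  have "0 < - 54 * x * sin x - 58 * x * sin (3 * x) + (81 - 108 * x ^ 2) * cos x
      + (12 * x ^ 2 - 81) * cos (3 * x)"
    using core_upper_trig_poly_pos assms b by simp
  also have "- 54 * x * sin x - 58 * x * sin (3 * x) + (81 - 108 * x ^ 2) * cos x
      + (12 * x ^ 2 - 81) * cos (3 * x)
    = 4 * (x * sin x ^ 2 * (sin x - x * cos x) + 105 * sin x * cos x * (sin x - x * cos x)
      - 35 * x ^ 2 * sin x ^ 2 * cos x - 24 * cos x * (sin x - x * cos x) ^ 2)"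
    unfolding cos_treble_cos sin_treble_sin using sin_cos_squared_add[of x] by algebra
  also have "\<dots> = 4 * (x * sin x * cos x * (sin x - x * cos x))
      * (11 * sinc_log_decay x + tan x - 35 * core_log_growth x)"
    using b assms by (simp add: tan_def core_log_growth_def sinc_log_decay_def field_simps power2_eq_square)
  finally have "0 < 4 * (x * sin x * cos x * (sin x - x * cos x))
      * (11 * sinc_log_decay x + tan x - 35 * core_log_growth x)"
    (is "0 < _ * ?D") .
  moreover have "0 < 4 * (x * sin x * cos x * (sin x - x * cos x))"
    using b assms by simp
  ultimately have "0 < ?D"
    by (rule zero_less_mult_pos)
  then show ?thesis
    by simp
qed

lemma pi_sq_ineq_small:
  fixes x k :: real
  assumes "0 < x" "x < 7/5" "k \<le> 3 - (6283/2000) ^ 2 / 4"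
  shows "x ^ 2 * sin x ^ 2 + k * (sin x - x * cos x) ^ 2 < 3 * sin x * (sin x - x * cos x)"
proof -
  have "0 < 39476089/32000000 - 24523911/32000000 * x ^ 2
      + (7476089/32000000 * x ^ 2 - 39476089/32000000) * cos (2 * x)
      - 15476089/16000000 * x * sin (2 * x)"
    using pi_sq_small_trig_poly_pos assms by simp
  also have "39476089/32000000 - 24523911/32000000 * x ^ 2
      + (7476089/32000000 * x ^ 2 - 39476089/32000000) * cos (2 * x)
      - 15476089/16000000 * x * sin (2 * x)
    = 3 * sin x * (sin x - x * cos x) - x ^ 2 * sin x ^ 2
      - (3 - (6283/2000) ^ 2 / 4) * (sin x - x * cos x) ^ 2"
    unfolding cos_double sin_double using sin_cos_squared_add[of x] by algebra
  finally show ?thesis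
    using assms(3) mult_right_mono[OF assms(3), of "(sin x - x * cos x) ^ 2"] by simp
qed

lemma pi_sq_ineq_deriv_neg:
  fixes x k :: real
  assumes "7/5 \<le> x" "x < 11/7" "3 - (3927/1250) ^ 2 / 4 \<le> k"
  shows "3 * cos x * (sin x - x * cos x) + x * sin x ^ 2 - 2 * x ^ 2 * sin x * cos x
    - 2 * k * x * sin x * (sin x - x * cos x) < 0"
proof -
  have "0 < 9578671/6250000 * x + (2921329/6250000 * x ^ 2 - 3/2) * sin (2 * x)
      + 9171329/6250000 * x * cos (2 * x)"
    using pi_sq_deriv_trig_poly_pos assms by simp
  also have "9578671/6250000 * x + (2921329/6250000 * x ^ 2 - 3/2) * sin (2 * x)
      + 9171329/6250000 * x * cos (2 * x)
    = - (3 * cos x * (sin x - x * cos x) + x * sin x ^ 2 - 2 * x ^ 2 * sin x * cos x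
      - 2 * (3 - (3927/1250) ^ 2 / 4) * x * sin x * (sin x - x * cos x))"
    unfolding cos_double sin_double using sin_cos_squared_add[of x] by algebra
  finally have "3 * cos x * (sin x - x * cos x) + x * sin x ^ 2 - 2 * x ^ 2 * sin x * cos x
      - 2 * (3 - (3927/1250) ^ 2 / 4) * (x * sin x * (sin x - x * cos x)) < 0"
    by (simp add: algebra_simps)
  moreover have "0 \<le> x * sin x * (sin x - x * cos x)"
  proof -
    have "x < pi"
      using assms pi_gt3 by linarith
    then show ?thesis
      using assms x_cos_less_sin[of x] sin_gt_zero[of x] by simp
  qed
  ultimately show ?thesis
    using mult_right_mono[OF assms(3), of "x * sin x * (sin x - x * cos x)"] by (simp add: algebra_simps)
qed

lemma pi_sq_ineq:
  assumes "0 < x" "x < pi / 2"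
  shows "x ^ 2 * sin x ^ 2 + (3 - pi ^ 2 / 4) * (sin x - x * cos x) ^ 2 < 3 * sin x * (sin x - x * cos x)"
proof -
  define k where "k = 3 - pi ^ 2 / 4"
  define G where "G t = 3 * sin t * (sin t - t * cos t) - t ^ 2 * sin t ^ 2 - k * (sin t - t * cos t) ^ 2" for t
  have k_bounds: "3 - (3927/1250) ^ 2 / 4 \<le> k" "k \<le> 3 - (6283/2000) ^ 2 / 4"
    unfolding k_def using pi_approx by (auto intro!: power_mono)
  have "0 < G x"
  proof (cases "x < 7/5")
    case True
    then show ?thesis
      using pi_sq_ineq_small[OF assms(1) True k_bounds(2)] unfolding G_def by simp
  next
    case False
    \<comment> \<open>\<open>G (pi / 2) = 0\<close>, so near \<open>pi / 2\<close> positivity comes from \<open>G' < 0\<close>.\<close>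
    have "G (pi / 2) < G x"
    proof (rule DERIV_neg_imp_decreasing[OF assms(2)])
      fix t assume t: "x \<le> t" "t \<le> pi / 2"
      have "(G has_real_derivative 3 * cos t * (sin t - t * cos t) + t * sin t ^ 2
          - 2 * t ^ 2 * sin t * cos t - 2 * k * t * sin t * (sin t - t * cos t)) (at t)"
        unfolding G_def by (auto intro!: derivative_eq_intros simp: power2_eq_square algebra_simps)
      moreover have "3 * cos t * (sin t - t * cos t) + t * sin t ^ 2 - 2 * t ^ 2 * sin t * cos t
          - 2 * k * t * sin t * (sin t - t * cos t) < 0"
        using False t pi_half_less_11_7 by (intro pi_sq_ineq_deriv_neg k_bounds(1)) auto
      ultimately show "\<exists>y. (G has_real_derivative y) (at t) \<and> y < 0"
        by blast
    qed
    moreover have "G (pi / 2) = 0"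
      unfolding G_def k_def by (simp add: power_divide)
    ultimately show ?thesis
      by simp
  qed
  then show ?thesis
    unfolding G_def k_def by simp
qed

lemma core_log_growth_less:
  assumes "0 < x" "x < pi / 2"
  shows "core_log_growth x < (pi ^ 2 / 4 - 2) * sinc_log_decay x"
proof -
  note b = sin_cos_basic_bounds[OF assms]
  have "0 < 3 * sin x * (sin x - x * cos x) - x ^ 2 * sin x ^ 2 - (3 - pi ^ 2 / 4) * (sin x - x * cos x) ^ 2"
    using pi_sq_ineq[OF assms] by simp
  also have "\<dots> = x * sin x * (sin x - x * cos x)
      * ((pi ^ 2 / 4 - 2) * sinc_log_decay x - core_log_growth x)"
    using b assms by (simp add: core_log_growth_def sinc_log_decay_def field_simps power2_eq_square)
  finally have "0 < x * sin x * (sin x - x * cos x)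
      * ((pi ^ 2 / 4 - 2) * sinc_log_decay x - core_log_growth x)"
    (is "0 < _ * ?D") .
  moreover have "0 < x * sin x * (sin x - x * cos x)"
    using b assms by simp
  ultimately have "0 < ?D"
    by (rule zero_less_mult_pos)
  then show ?thesis
    by simp
qed

lemma sinc_log_decay_pos:
  assumes "0 < x" "x < pi / 2"
  shows "0 < sinc_log_decay x"
  using sin_cos_basic_bounds[OF assms] assms by (simp add: sinc_log_decay_def)

text \<open>\<open>ln (f' / g')\<close> for \<open>f x = U p (sin x / x)\<close> and \<open>g x = U q (cos x)\<close>.\<close>

definition log_slope_ratio :: "real \<Rightarrow> real \<Rightarrow> real \<Rightarrow> real" where
  "log_slope_ratio p q x = (p - 1) * ln (sin x / x) + ln (sin x - x * cos x) - 2 * ln x - ln (sin x)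
    - (q - 1) * ln (cos x)"

definition log_slope_ratio_deriv :: "real \<Rightarrow> real \<Rightarrow> real \<Rightarrow> real" where
  "log_slope_ratio_deriv p q x = (1 - p) * sinc_log_decay x + core_log_growth x + (q - 1) * tan x"

lemma log_slope_ratio_deriv_pos:
  assumes "1 \<le> q" "p \<le> 3 * q - 8/5" "0 < x" "x < pi / 2"
  shows "0 < log_slope_ratio_deriv p q x"
proof -
  have "log_slope_ratio_deriv p q x = (q - 1) * (tan x - 3 * sinc_log_decay x)
      + (core_log_growth x - 2/5 * sinc_log_decay x) + (3 * q - 8/5 - p) * sinc_log_decay x"
    unfolding log_slope_ratio_deriv_def by (simp add: algebra_simps)
  moreover have "0 \<le> (q - 1) * (tan x - 3 * sinc_log_decay x)"
    using assms three_sinc_log_decay_less_tan[OF assms(3,4)] by simp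
  moreover have "0 \<le> (3 * q - 8/5 - p) * sinc_log_decay x"
    using assms sinc_log_decay_pos[OF assms(3,4)] by simp
  ultimately show ?thesis
    using two_sinc_log_decay_less_five_core_log_growth[OF assms(3,4)] by linarith
qed

lemma log_slope_ratio_deriv_neg_of_pi:
  assumes "q \<le> 1" "pi ^ 2 / 4 - 1 \<le> p" "0 < x" "x < pi / 2"
  shows "log_slope_ratio_deriv p q x < 0"
proof -
  have "log_slope_ratio_deriv p q x = (core_log_growth x - (pi ^ 2 / 4 - 2) * sinc_log_decay x)
      + (pi ^ 2 / 4 - 1 - p) * sinc_log_decay x + (q - 1) * tan x"
    unfolding log_slope_ratio_deriv_def by (simp add: algebra_simps)
  moreover have "(pi ^ 2 / 4 - 1 - p) * sinc_log_decay x \<le> 0"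
    using assms sinc_log_decay_pos[OF assms(3,4)] by (simp add: mult_nonpos_nonneg)
  moreover have "(q - 1) * tan x \<le> 0"
    using assms tan_gt_zero[OF assms(3,4)] by (simp add: mult_nonpos_nonneg)
  ultimately show ?thesis
    using core_log_growth_less[OF assms(3,4)] by linarith
qed

lemma log_slope_ratio_deriv_neg:
  assumes "q \<le> 34/35" "3 * q - 8/5 \<le> p" "0 < x" "x < pi / 2"
  shows "log_slope_ratio_deriv p q x < 0"
proof -
  have "log_slope_ratio_deriv p q x = (q - 34/35) * (tan x - 3 * sinc_log_decay x)
      + (core_log_growth x - 11/35 * sinc_log_decay x - tan x / 35) + (3 * q - 8/5 - p) * sinc_log_decay x"
    unfolding log_slope_ratio_deriv_def by (simp add: field_simps)
  moreover have "(q - 34/35) * (tan x - 3 * sinc_log_decay x) \<le> 0"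
    using assms three_sinc_log_decay_less_tan[OF assms(3,4)] by (simp add: mult_nonpos_nonneg)
  moreover have "(3 * q - 8/5 - p) * sinc_log_decay x \<le> 0"
    using assms sinc_log_decay_pos[OF assms(3,4)] by (simp add: mult_nonpos_nonneg)
  ultimately show ?thesis
    using thirty_five_core_log_growth_less[OF assms(3,4)] by linarith
qed

lemma eventually_between_at_right:
  fixes a t :: real
  assumes "a < t"
  shows "eventually (\<lambda>s. a < s \<and> s < t) (at_right a)"
  using assms unfolding eventually_at_right_field by auto

locale monotone_lhopital_right =
  fixes a b :: real and f g f' g' h :: "real \<Rightarrow> real"
  assumes f_tendsto: "(f \<longlongrightarrow> 0) (at_right a)" and g_tendsto: "(g \<longlongrightarrow> 0) (at_right a)"
    and f_deriv: "\<And>x. a < x \<Longrightarrow> x < b \<Longrightarrow> (f has_real_derivative f' x) (at x)"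
    and g_deriv: "\<And>x. a < x \<Longrightarrow> x < b \<Longrightarrow> (g has_real_derivative g' x) (at x)"
    and g'_pos: "\<And>x. a < x \<Longrightarrow> x < b \<Longrightarrow> 0 < g' x"
    and f'_eq: "\<And>x. a < x \<Longrightarrow> x < b \<Longrightarrow> f' x = h x * g' x"
    and h_strict_mono: "\<And>x y. a < x \<Longrightarrow> x < y \<Longrightarrow> y < b \<Longrightarrow> h x < h y"
begin

lemma cauchy_mean_value:
  assumes "a < s" "s < t" "t < b"
  shows "\<exists>\<xi>. s < \<xi> \<and> \<xi> < t \<and> f t - f s = h \<xi> * (g t - g s)"
proof -
  have "\<exists>\<xi>. s < \<xi> \<and> \<xi> < t \<and> (f t - f s) * g' \<xi> = (g t - g s) * f' \<xi>"
  proof (rule GMVT'[OF assms(2)])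
    fix z assume "s \<le> z" "z \<le> t"
    then have z: "a < z" "z < b"
      using assms by auto
    show "isCont f z"
      by (rule DERIV_isCont[OF f_deriv[OF z]])
    show "isCont g z"
      by (rule DERIV_isCont[OF g_deriv[OF z]])
  next
    fix z assume "s < z" "z < t"
    then have z: "a < z" "z < b"
      using assms by auto
    show "(f has_real_derivative f' z) (at z)"
      by (rule f_deriv[OF z])
    show "(g has_real_derivative g' z) (at z)"
      by (rule g_deriv[OF z])
  qed
  then obtain \<xi> where \<xi>: "s < \<xi>" "\<xi> < t" "(f t - f s) * g' \<xi> = (g t - g s) * f' \<xi>"
    by blast
  moreover have "f' \<xi> = h \<xi> * g' \<xi>"
    using \<xi> assms by (intro f'_eq) auto
  ultimately have "(f t - f s) * g' \<xi> = h \<xi> * (g t - g s) * g' \<xi>"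
    by (simp add: ac_simps)
  moreover have "0 < g' \<xi>"
    using \<xi> assms by (intro g'_pos) auto
  ultimately have "f t - f s = h \<xi> * (g t - g s)"
    by simp
  then show ?thesis
    using \<xi> by blast
qed

lemma g_strict_mono:
  assumes "a < s" "s < t" "t < b"
  shows "g s < g t"
proof (rule DERIV_pos_imp_increasing[OF assms(2)])
  fix z assume "s \<le> z" "z \<le> t"
  then have "a < z" "z < b"
    using assms by auto
  then show "\<exists>y. (g has_real_derivative y) (at z) \<and> 0 < y"
    using g_deriv g'_pos by blast
qed

lemma g_pos:
  assumes "a < t" "t < b"
  shows "0 < g t"
proof -
  have "eventually (\<lambda>s. g s \<le> g ((a + t) / 2)) (at_right a)"
    using eventually_between_at_right[of a "(a + t) / 2"] assms
    by (auto elim!: eventually_mono intro!: less_imp_le g_strict_mono)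
  then have "0 \<le> g ((a + t) / 2)"
    by (intro tendsto_upperbound[OF g_tendsto]) simp_all
  then show ?thesis
    using g_strict_mono[of "(a + t) / 2" t] assms by simp
qed

lemma f_le_h_mult_g:
  assumes "a < t" "t < b"
  shows "f t \<le> h t * g t"
proof -
  have lim_h: "((\<lambda>s. h t * (g t - g s)) \<longlongrightarrow> h t * (g t - 0)) (at_right a)"
    by (intro tendsto_intros g_tendsto)
  have lim_f: "((\<lambda>s. f t - f s) \<longlongrightarrow> f t - 0) (at_right a)"
    by (intro tendsto_intros f_tendsto)
  have "eventually (\<lambda>s. f t - f s \<le> h t * (g t - g s)) (at_right a)"
    using eventually_between_at_right[OF assms(1)]
  proof eventually_elim
    case (elim s)
    then obtain \<xi> where \<xi>: "s < \<xi>" "\<xi> < t" "f t - f s = h \<xi> * (g t - g s)"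
      using cauchy_mean_value assms by blast
    have "h \<xi> * (g t - g s) \<le> h t * (g t - g s)"
      using \<xi> elim assms
      by (intro mult_right_mono less_imp_le h_strict_mono) (auto intro: less_imp_le g_strict_mono)
    then show ?case
      using \<xi>(3) by simp
  qed
  then have "f t - 0 \<le> h t * (g t - 0)"
    by (rule tendsto_le[OF trivial_limit_at_right_real lim_h lim_f])
  then show ?thesis
    by simp
qed

lemma ratio_strict_mono:
  assumes "a < x" "x < y" "y < b"
  shows "f x / g x < f y / g y"
proof -
  obtain \<xi> where \<xi>: "x < \<xi>" "\<xi> < y" "f y - f x = h \<xi> * (g y - g x)"
    using cauchy_mean_value assms by blast
  have g_xy: "0 < g x" "g x < g y"
    using g_pos g_strict_mono assms by auto
  have "h x * (g y - g x) < h \<xi> * (g y - g x)"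
    using \<xi> assms g_xy by (intro mult_strict_right_mono h_strict_mono) auto
  then have sum_less: "f x + h x * (g y - g x) < f y"
    using \<xi> by simp
  have "f x * g y = f x * g x + f x * (g y - g x)"
    by (simp add: algebra_simps)
  also have "\<dots> \<le> f x * g x + h x * g x * (g y - g x)"
    using f_le_h_mult_g[of x] assms g_xy by (simp add: mult_right_mono)
  also have "\<dots> = (f x + h x * (g y - g x)) * g x"
    by (simp add: algebra_simps)
  also have "\<dots> < f y * g x"
    using sum_less g_xy by (intro mult_strict_right_mono)
  finally show ?thesis
    using g_xy g_pos[of y] assms by (simp add: field_simps)
qed

end

lemma U_has_real_derivative:
  assumes "0 < t"
  shows "(U p has_real_derivative - (t powr (p - 1))) (at t)"
proof (cases "p = 0")
  case True
  have "((\<lambda>t. - ln t) has_real_derivative - (1 / t)) (at t)"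
    using assms by (auto intro!: derivative_eq_intros)
  then show ?thesis
    using True assms by (simp add: U_def[abs_def] powr_minus_divide)
next
  case False
  have "((\<lambda>t. (1 - t powr p) / p) has_real_derivative (0 - p * t powr (p - 1)) / p) (at t)"
    using assms by (auto intro!: derivative_eq_intros)
  then show ?thesis
    using False by (simp add: U_def[abs_def])
qed

lemma tendsto_U_zero:
  assumes "(w \<longlongrightarrow> 1) F"
  shows "((\<lambda>x. U p (w x)) \<longlongrightarrow> 0) F"
proof (cases "p = 0")
  case True
  have "((\<lambda>x. - ln (w x)) \<longlongrightarrow> - ln 1) F"
    by (intro tendsto_intros assms) simp
  then show ?thesis
    using True by (simp add: U_def)
next
  case False
  have "((\<lambda>x. (1 - w x powr p) / p) \<longlongrightarrow> (1 - 1 powr p) / p) F"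
    using False by (intro tendsto_intros assms) simp_all
  then show ?thesis
    using False by (simp add: U_def)
qed

lemma tendsto_sin_div_self_at_right: "((\<lambda>x. sin x / x) \<longlongrightarrow> 1) (at_right (0::real))"
proof -
  have "((\<lambda>x. (sin x - sin 0) / (x - 0)) \<longlongrightarrow> cos 0) (at (0::real))"
    using DERIV_sin[of 0] unfolding has_field_derivative_iff .
  then have "((\<lambda>x. sin x / x) \<longlongrightarrow> 1) (at (0::real))"
    by simp
  then show ?thesis
    by (rule tendsto_mono[OF at_le, rotated]) simp
qed

lemma log_slope_ratio_has_real_derivative:
  assumes "0 < x" "x < pi / 2"
  shows "(log_slope_ratio p q has_real_derivative log_slope_ratio_deriv p q x) (at x)"
proof -
  note b = sin_cos_basic_bounds[OF assms]
  have "(log_slope_ratio p q has_real_derivative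
      (p - 1) * (((cos x * x - sin x * 1) / (x * x)) / (sin x / x))
      + (cos x - (1 * cos x + x * (- sin x))) / (sin x - x * cos x)
      - 2 * (1 / x) - cos x / sin x - (q - 1) * (- sin x / cos x)) (at x)"
    unfolding log_slope_ratio_def[abs_def] using b assms
    by (intro derivative_eq_intros) (auto simp: mult_ac)
  moreover have "(p - 1) * (((cos x * x - sin x * 1) / (x * x)) / (sin x / x))
      + (cos x - (1 * cos x + x * (- sin x))) / (sin x - x * cos x)
      - 2 * (1 / x) - cos x / sin x - (q - 1) * (- sin x / cos x) = log_slope_ratio_deriv p q x"
    using b assms
    by (simp add: log_slope_ratio_deriv_def sinc_log_decay_def core_log_growth_def tan_def field_simps)
  ultimately show ?thesis
    by simp
qed

lemma U_cos_has_real_derivative: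
  assumes "0 < x" "x < pi / 2"
  shows "((\<lambda>x. U q (cos x)) has_real_derivative cos x powr (q - 1) * sin x) (at x)"
  using DERIV_chain2[OF U_has_real_derivative[OF cos_gt_zero] DERIV_cos] assms by simp

lemma U_sin_div_self_has_real_derivative:
  assumes "0 < x" "x < pi / 2"
  shows "((\<lambda>x. U p (sin x / x)) has_real_derivative
    exp (log_slope_ratio p q x) * (cos x powr (q - 1) * sin x)) (at x)"
proof -
  note b = sin_cos_basic_bounds[OF assms]
  have "((\<lambda>x. sin x / x) has_real_derivative (cos x * x - sin x * 1) / (x * x)) (at x)"
    using assms by (intro derivative_eq_intros) auto
  then have deriv: "((\<lambda>x. U p (sin x / x)) has_real_derivative
      - ((sin x / x) powr (p - 1)) * ((cos x * x - sin x * 1) / (x * x))) (at x)"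
    using b assms by (intro DERIV_chain2[OF U_has_real_derivative]) simp_all
  have chain_value: "- ((sin x / x) powr (p - 1)) * ((cos x * x - sin x * 1) / (x * x))
      = (sin x / x) powr (p - 1) * (sin x - x * cos x) / (x * x)"
    by (simp add: field_simps)
  have "exp (2 * ln x) = x * x"
    using assms by (simp only: mult_2 exp_add exp_ln)
  then have ratio_value: "exp (log_slope_ratio p q x) * (cos x powr (q - 1) * sin x)
      = (sin x / x) powr (p - 1) * (sin x - x * cos x) / (x * x)"
    using b assms by (simp add: log_slope_ratio_def exp_diff exp_add powr_def)
  show ?thesis
    unfolding ratio_value using deriv unfolding chain_value .
qed

lemma T_strict_mono_of_slope_ratio:
  fixes \<sigma> :: real
  assumes mono: "\<And>x y. 0 < x \<Longrightarrow> x < y \<Longrightarrow> y < pi / 2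
      \<Longrightarrow> \<sigma> * exp (log_slope_ratio p q x) < \<sigma> * exp (log_slope_ratio p q y)"
    and xy: "0 < x" "x < y" "y < pi / 2"
  shows "\<sigma> * T p q x < \<sigma> * T p q y"
proof -
  have "monotone_lhopital_right 0 (pi / 2) (\<lambda>x. \<sigma> * U p (sin x / x)) (\<lambda>x. U q (cos x))
      (\<lambda>x. \<sigma> * exp (log_slope_ratio p q x) * (cos x powr (q - 1) * sin x))
      (\<lambda>x. cos x powr (q - 1) * sin x) (\<lambda>x. \<sigma> * exp (log_slope_ratio p q x))"
  proof unfold_locales
    show "((\<lambda>x. \<sigma> * U p (sin x / x)) \<longlongrightarrow> 0) (at_right 0)"
      using tendsto_mult_right_zero[OF tendsto_U_zero[OF tendsto_sin_div_self_at_right]] .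
    show "((\<lambda>x. U q (cos x)) \<longlongrightarrow> 0) (at_right 0)"
      by (intro tendsto_U_zero) (auto intro!: tendsto_eq_intros)
    show "0 < cos t powr (q - 1) * sin t" if "0 < t" "t < pi / 2" for t
      using sin_cos_basic_bounds[OF that] by simp
  qed (use mono in \<open>auto intro!: DERIV_cmult U_sin_div_self_has_real_derivative
         U_cos_has_real_derivative simp: mult.assoc\<close>)
  then have "(\<sigma> * U p (sin x / x)) / U q (cos x) < (\<sigma> * U p (sin y / y)) / U q (cos y)"
    using xy by (rule monotone_lhopital_right.ratio_strict_mono)
  then show ?thesis
    by (simp add: T_def)
qed

lemma T_strict_incr_on:
  assumes "\<And>x. 0 < x \<Longrightarrow> x < pi / 2 \<Longrightarrow> 0 < log_slope_ratio_deriv p q x"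
  shows "strict_incr_on {0<..<pi / 2} (T p q)"
  unfolding strict_incr_on_def
proof (intro ballI impI)
  have "log_slope_ratio p q x < log_slope_ratio p q y" if "0 < x" "x < y" "y < pi / 2" for x y
    using that assms log_slope_ratio_has_real_derivative
    by (intro DERIV_pos_imp_increasing[OF that(2)]) (meson le_less_trans less_le_trans)
  then show "T p q x < T p q y" if "x \<in> {0<..<pi / 2}" "y \<in> {0<..<pi / 2}" "x < y" for x y
    using T_strict_mono_of_slope_ratio[of 1 p q x y] that by simp
qed

lemma T_strict_decr_on:
  assumes "\<And>x. 0 < x \<Longrightarrow> x < pi / 2 \<Longrightarrow> log_slope_ratio_deriv p q x < 0"
  shows "strict_decr_on {0<..<pi / 2} (T p q)"
  unfolding strict_decr_on_def
proof (intro ballI impI)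
  have "log_slope_ratio p q x > log_slope_ratio p q y" if "0 < x" "x < y" "y < pi / 2" for x y
    using that assms log_slope_ratio_has_real_derivative
    by (intro DERIV_neg_imp_decreasing[OF that(2)]) (meson le_less_trans less_le_trans)
  then show "T p q x > T p q y" if "x \<in> {0<..<pi / 2}" "y \<in> {0<..<pi / 2}" "x < y" for x y
    using T_strict_mono_of_slope_ratio[of "- 1" p q x y] that by simp
qed

theorem proposition1:
  fixes p q :: real
  shows "(q > 1 \<and> p \<le> 3 * q - 8 / 5 \<longrightarrow> strict_incr_on {0<..<pi/2} (T p q))
   \<and> (q = 1 \<and> p \<le> 7 / 5 \<longrightarrow> strict_incr_on {0<..<pi/2} (T p q))
   \<and> (q = 1 \<and> p \<ge> pi^2 / 4 - 1 \<longrightarrow> strict_decr_on {0<..<pi/2} (T p q))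
   \<and> (34 / 35 < q \<and> q < 1 \<and> p \<ge> pi^2 / 4 - 1 \<longrightarrow> strict_decr_on {0<..<pi/2} (T p q))
   \<and> (q \<le> 34 / 35 \<and> p \<ge> 3 * q - 8 / 5 \<longrightarrow> strict_decr_on {0<..<pi/2} (T p q))"
proof (intro conjI impI)
  assume "q > 1 \<and> p \<le> 3 * q - 8 / 5"
  then show "strict_incr_on {0<..<pi/2} (T p q)"
    by (intro T_strict_incr_on log_slope_ratio_deriv_pos) auto
next
  assume "q = 1 \<and> p \<le> 7 / 5"
  then show "strict_incr_on {0<..<pi/2} (T p q)"
    by (intro T_strict_incr_on log_slope_ratio_deriv_pos) auto
next
  assume "q = 1 \<and> p \<ge> pi^2 / 4 - 1"
  then show "strict_decr_on {0<..<pi/2} (T p q)"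
    by (intro T_strict_decr_on log_slope_ratio_deriv_neg_of_pi) auto
next
  assume "34 / 35 < q \<and> q < 1 \<and> p \<ge> pi^2 / 4 - 1"
  then show "strict_decr_on {0<..<pi/2} (T p q)"
    by (intro T_strict_decr_on log_slope_ratio_deriv_neg_of_pi) auto
next
  assume "q \<le> 34 / 35 \<and> p \<ge> 3 * q - 8 / 5"
  then show "strict_decr_on {0<..<pi/2} (T p q)"
    by (intro T_strict_decr_on log_slope_ratio_deriv_neg) auto
qed

end
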